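(* Let $(\Omega,\mathcal{F})$ be a measurable space, $\mathrm{B}_b$ the space of bounded real-valued measurable functions on $\Omega$, and $C\subset\mathrm{B}_b$ a linear subspace containing all constant functions. Let $H\colon C\to\mathbb{R}$ be a convex premium principle and let $R_{\mathrm{Max}}(X):=\inf\{H(X_0)\mid X_0\in C,\ X_0\ge X\}$ for $X\in\mathrm{B}_b$. Then $$R_{\mathrm{Max}}(X)=\max_{\mathbb{P}\in\mathrm{ba}_+^1}\big(\mathbb{E}_{\mathbb{P}}(X)-H^*(\mathbb{P})\big)\quad\text{for all }X\in\mathrm{B}_b,$$ and $$H^*(\mathbb{P})=\sup_{X\in\mathrm{B}_b}\big(\mathbb{E}_{\mathbb{P}}(X)-R_{\mathrm{Max}}(X)\big)\quad\text{for all }\mathbb{P}\in\mathrm{ba}_+^1.$$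
   Context: A premium principle is a map $H\colon C\to\mathbb{R}$ with $H(X+m)=H(X)+m$ for $X\in C$, $m\in\mathbb{R}$, $H(0)=0$, and $H(X)\ge 0$ for $X\in C$ with $X\ge 0$ (pointwise order). $H$ is convex if $H(\lambda X+(1-\lambda)Y)\le\lambda H(X)+(1-\lambda)H(Y)$ for $\lambda\in[0,1]$, $X,Y\in C$. $\mathrm{ba}_+^1$ denotes the set of finitely additive probability measures on $(\Omega,\mathcal{F})$, $\mathbb{E}_{\mathbb{P}}$ the corresponding integral of bounded measurable functions, and $H^*(\mathbb{P}):=\sup_{X\in C}(\mathbb{E}_{\mathbb{P}}(X)-H(X))\in[0,\infty]$. *)

theory Defs
  imports "HOL-Analysis.Analysis"
begin

text \<open>The measurable space (Omega, F) is represented by the type 'a as Omega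
  and a sigma-algebra F on UNIV.\<close>

definition meas_wrt :: "'a set set \<Rightarrow> ('a \<Rightarrow> real) \<Rightarrow> bool" where
  "meas_wrt F X \<longleftrightarrow> (\<forall>B \<in> sets borel. X -` B \<in> F)"

definition Bb :: "'a set set \<Rightarrow> ('a \<Rightarrow> real) set" where
  "Bb F = {X. meas_wrt F X \<and> (\<exists>c. \<forall>x. \<bar>X x\<bar> \<le> c)}"

definition ba1 :: "'a set set \<Rightarrow> ('a set \<Rightarrow> real) set" where
  "ba1 F = {P. (\<forall>A\<in>F. 0 \<le> P A) \<and> P UNIV = 1 \<and>
     (\<forall>A\<in>F. \<forall>B\<in>F. A \<inter> B = {} \<longrightarrow> P (A \<union> B) = P A + P B)}"

definition simple_meas :: "'a set set \<Rightarrow> ('a \<Rightarrow> real) \<Rightarrow> bool" where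
  "simple_meas F s \<longleftrightarrow> finite (range s) \<and> meas_wrt F s"

definition simple_int :: "('a set \<Rightarrow> real) \<Rightarrow> ('a \<Rightarrow> real) \<Rightarrow> real" where
  "simple_int P s = (\<Sum>y\<in>range s. y * P (s -` {y}))"

definition expect :: "'a set set \<Rightarrow> ('a set \<Rightarrow> real) \<Rightarrow> ('a \<Rightarrow> real) \<Rightarrow> real" where
  "expect F P X = Sup {simple_int P s | s. simple_meas F s \<and> s \<le> X}"

definition premium_principle :: "'a set set \<Rightarrow> ('a \<Rightarrow> real) set \<Rightarrow> (('a \<Rightarrow> real) \<Rightarrow> real) \<Rightarrow> bool" where
  "premium_principle F C H \<longleftrightarrow>
     (\<forall>X\<in>C. \<forall>m. H (\<lambda>x. X x + m) = H X + m) \<and> H (\<lambda>x. 0) = 0 \<and>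
     (\<forall>X\<in>C. (\<forall>x. 0 \<le> X x) \<longrightarrow> 0 \<le> H X)"

definition convex_pp :: "('a \<Rightarrow> real) set \<Rightarrow> (('a \<Rightarrow> real) \<Rightarrow> real) \<Rightarrow> bool" where
  "convex_pp C H \<longleftrightarrow> (\<forall>X\<in>C. \<forall>Y\<in>C. \<forall>l::real. 0 \<le> l \<and> l \<le> 1 \<longrightarrow>
     H (\<lambda>x. l * X x + (1 - l) * Y x) \<le> l * H X + (1 - l) * H Y)"

definition Hstar :: "'a set set \<Rightarrow> ('a \<Rightarrow> real) set \<Rightarrow> (('a \<Rightarrow> real) \<Rightarrow> real) \<Rightarrow> ('a set \<Rightarrow> real) \<Rightarrow> ereal" where
  "Hstar F C H P = (SUP X\<in>C. ereal (expect F P X - H X))"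

definition RMax :: "('a \<Rightarrow> real) set \<Rightarrow> (('a \<Rightarrow> real) \<Rightarrow> real) \<Rightarrow> ('a \<Rightarrow> real) \<Rightarrow> ereal" where
  "RMax C H X = (INF X0\<in>{X0\<in>C. \<forall>x. X x \<le> X0 x}. ereal (H X0))"

end

(*
  Weak duality, E_Q X - H^*(Q) <= R_Max X, only uses that E_Q is monotone. For the converse,
  R_Max is a real-valued, monotone, convex and cash-subadditive functional on bounded
  functions, so a Zorn's lemma (Hahn-Banach) extension gives a linear L with
  L Y <= R_Max (X + Y) - R_Max X for all bounded Y, i.e. a subgradient of R_Max at X.
  Monotonicity and cash-subadditivity force L to be positive with L 1 = 1, hence L is the
  integral against the finitely additive probability P A = L (1_A); testing the subgradient
  inequality on C gives H^*(P) = E_P X - R_Max X. The conjugate formula for H^* then follows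
  from R_Max <= H on C.
*)

theory Submission
  imports Defs
begin

section \<open>Linear minorants of convex functionals\<close>

locale linear_function_space =
  fixes V :: "('a \<Rightarrow> real) set"
  assumes zero_mem: "(\<lambda>x. 0) \<in> V"
    and add_mem: "X \<in> V \<Longrightarrow> Y \<in> V \<Longrightarrow> (\<lambda>x. X x + Y x) \<in> V"
    and scale_mem: "X \<in> V \<Longrightarrow> (\<lambda>x. c * X x) \<in> V"
begin

lemma lincomb_mem: "X \<in> V \<Longrightarrow> Y \<in> V \<Longrightarrow> (\<lambda>x. X x + c * Y x) \<in> V"
  using add_mem[of X "\<lambda>x. c * Y x"] scale_mem by blast

lemma sum_mem: "finite I \<Longrightarrow> (\<And>i. i \<in> I \<Longrightarrow> f i \<in> V) \<Longrightarrow> (\<lambda>x. \<Sum>i\<in>I. f i x) \<in> V"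
proof (induction I rule: finite_induct)
  case (insert j I)
  then show ?case using add_mem[of "f j" "\<lambda>x. \<Sum>i\<in>I. f i x"] by simp
qed (simp add: zero_mem)

end

locale convex_functional = linear_function_space V for V :: "('a \<Rightarrow> real) set" +
  fixes g :: "('a \<Rightarrow> real) \<Rightarrow> real"
  assumes convex: "X \<in> V \<Longrightarrow> Y \<in> V \<Longrightarrow> 0 \<le> l \<Longrightarrow> l \<le> 1 \<Longrightarrow>
      g (\<lambda>x. l * X x + (1 - l) * Y x) \<le> l * g X + (1 - l) * g Y"
    and nonneg_at_zero: "0 \<le> g (\<lambda>x. 0)"
begin

text \<open>Graphs of linear functionals on subspaces of \<open>V\<close> that lie below \<open>g\<close>; single-valuedness
  is expressed by the kernel condition on \<open>(0, a)\<close>, which suffices by linearity.\<close>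

definition dominated_linear_graph :: "(('a \<Rightarrow> real) \<times> real) set \<Rightarrow> bool" where
  "dominated_linear_graph G \<longleftrightarrow> G \<subseteq> V \<times> UNIV \<and>
     (\<forall>X a Y b. (X, a) \<in> G \<longrightarrow> (Y, b) \<in> G \<longrightarrow> ((\<lambda>x. X x + Y x), a + b) \<in> G) \<and>
     (\<forall>X a c. (X, a) \<in> G \<longrightarrow> ((\<lambda>x. c * X x), c * a) \<in> G) \<and>
     (\<forall>a. ((\<lambda>x. 0), a) \<in> G \<longrightarrow> a = 0) \<and>
     (\<forall>X a. (X, a) \<in> G \<longrightarrow> a \<le> g X)"

lemma dominated_linear_graphD:
  assumes "dominated_linear_graph G"
  shows dominated_linear_graph_subset: "G \<subseteq> V \<times> UNIV"
    and dominated_linear_graph_add: "(X, a) \<in> G \<Longrightarrow> (Y, b) \<in> G \<Longrightarrow> ((\<lambda>x. X x + Y x), a + b) \<in> G"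
    and dominated_linear_graph_scale: "(X, a) \<in> G \<Longrightarrow> ((\<lambda>x. c * X x), c * a) \<in> G"
    and dominated_linear_graph_zero: "((\<lambda>x. 0), a) \<in> G \<Longrightarrow> a = 0"
    and dominated_linear_graph_le: "(X, a) \<in> G \<Longrightarrow> a \<le> g X"
  using assms unfolding dominated_linear_graph_def by blast+

lemma dominated_linear_graph_unique:
  assumes G: "dominated_linear_graph G" and "(X, a) \<in> G" "(X, b) \<in> G"
  shows "a = b"
proof -
  have "((\<lambda>x. 0), a - b) \<in> G"
    using dominated_linear_graph_add[OF G assms(2) dominated_linear_graph_scale[OF G assms(3), of "- 1"]]
    by simp
  then have "a - b = 0" by (rule dominated_linear_graph_zero[OF G])
  then show ?thesis by simp
qed

lemma dominated_linear_graph_Union_chain: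
  assumes "Ch \<in> chains (Collect dominated_linear_graph)"
  shows "dominated_linear_graph (\<Union>Ch)"
proof -
  have graphs: "\<And>G. G \<in> Ch \<Longrightarrow> dominated_linear_graph G"
    using assms by (auto simp: chains_def)
  have common: "\<exists>G\<in>Ch. p \<in> G \<and> q \<in> G" if "p \<in> \<Union>Ch" "q \<in> \<Union>Ch" for p q
    using that assms unfolding chains_def chain_subset_def by blast
  show ?thesis
    unfolding dominated_linear_graph_def
  proof (intro conjI allI impI)
    show "\<Union>Ch \<subseteq> V \<times> UNIV"
      using graphs unfolding dominated_linear_graph_def by blast
  next
    fix X a Y b assume "(X, a) \<in> \<Union>Ch" "(Y, b) \<in> \<Union>Ch"
    with common obtain G where "G \<in> Ch" "(X, a) \<in> G" "(Y, b) \<in> G" by blast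
    then show "((\<lambda>x. X x + Y x), a + b) \<in> \<Union>Ch"
      using graphs unfolding dominated_linear_graph_def by blast
  next
    fix X a c assume "(X, a) \<in> \<Union>Ch"
    then show "((\<lambda>x. c * X x), c * a) \<in> \<Union>Ch"
      using graphs unfolding dominated_linear_graph_def by blast
  next
    fix a assume "((\<lambda>x. 0), a) \<in> \<Union>Ch"
    then show "a = 0"
      using graphs unfolding dominated_linear_graph_def by blast
  next
    fix X a assume "(X, a) \<in> \<Union>Ch"
    then show "a \<le> g X"
      using graphs unfolding dominated_linear_graph_def by blast
  qed
qed

lemma dominated_linear_graph_zero_mem:
  assumes G: "dominated_linear_graph G" "G \<noteq> {}"
  shows "((\<lambda>x. 0), 0) \<in> G"
proof -
  obtain m a where "(m, a) \<in> G" using G(2) by auto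
  from dominated_linear_graph_scale[OF G(1) this, of 0] show ?thesis by simp
qed

lemma dominated_linear_graph_slopes:
  assumes G: "dominated_linear_graph G" and y: "y \<in> V"
    and m: "(m, a) \<in> G" and m': "(m', a') \<in> G" and s: "0 < s" and t: "0 < t"
  shows "(a' - g (\<lambda>x. m' x - s * y x)) / s \<le> (g (\<lambda>x. m x + t * y x) - a) / t"
proof -
  define l where "l = s / (s + t)"
  define g1 where "g1 = g (\<lambda>x. m x + t * y x)"
  define g2 where "g2 = g (\<lambda>x. m' x - s * y x)"
  have l: "0 \<le> l" "l \<le> 1" using s t by (auto simp: l_def)
  have sl: "(s + t) * l = s" and tl: "(s + t) * (1 - l) = t"
    using s t by (simp_all add: l_def field_simps)
  have cancel: "l * t = (1 - l) * s" using s t by (simp add: l_def field_simps)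
  have scale_back: "(s + t) * (l * u + (1 - l) * v) = s * u + t * v" for u v
    by (simp add: distrib_left mult.assoc [symmetric] sl tl)
  have mV: "m \<in> V" and m'V: "m' \<in> V"
    using m m' dominated_linear_graph_subset[OF G] by auto
  have "((\<lambda>x. l * m x + (1 - l) * m' x), l * a + (1 - l) * a') \<in> G"
    using dominated_linear_graph_add[OF G dominated_linear_graph_scale[OF G m] dominated_linear_graph_scale[OF G m']]
    by simp
  then have "l * a + (1 - l) * a' \<le> g (\<lambda>x. l * m x + (1 - l) * m' x)"
    by (rule dominated_linear_graph_le[OF G])
  also have "(\<lambda>x. l * m x + (1 - l) * m' x) = (\<lambda>x. l * (m x + t * y x) + (1 - l) * (m' x - s * y x))"
  proof
    fix x
    have "l * (m x + t * y x) + (1 - l) * (m' x - s * y x)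
        = l * m x + (1 - l) * m' x + (l * t - (1 - l) * s) * y x"
      by (simp add: algebra_simps)
    then show "l * m x + (1 - l) * m' x = l * (m x + t * y x) + (1 - l) * (m' x - s * y x)"
      using cancel by simp
  qed
  also have "g \<dots> \<le> l * g1 + (1 - l) * g2"
    using convex[OF lincomb_mem[OF mV y, of t] lincomb_mem[OF m'V y, of "- s"] l]
    by (simp add: g1_def g2_def)
  finally have "(s + t) * (l * a + (1 - l) * a') \<le> (s + t) * (l * g1 + (1 - l) * g2)"
    using s t by simp
  then have "s * a + t * a' \<le> s * g1 + t * g2"
    by (simp only: scale_back)
  then show ?thesis
    using s t by (simp add: g1_def [symmetric] g2_def [symmetric] field_simps)
qed

lemma dominated_linear_graph_extension_value:
  assumes G: "dominated_linear_graph G" "G \<noteq> {}" and y: "y \<in> V"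
  shows "\<exists>c. \<forall>m a t. (m, a) \<in> G \<longrightarrow> a + t * c \<le> g (\<lambda>x. m x + t * y x)"
proof -
  note zero = dominated_linear_graph_zero_mem[OF G]
  define S where "S = {(a - g (\<lambda>x. m x - s * y x)) / s | m a s. (m, a) \<in> G \<and> 0 < s}"
  have "(0 - g (\<lambda>x. (\<lambda>x. 0) x - 1 * y x)) / 1 \<in> S"
    unfolding S_def mem_Collect_eq
    by (rule exI[of _ "\<lambda>x. 0"], rule exI[of _ 0], rule exI[of _ 1]) (simp add: zero)
  then have S_ne: "S \<noteq> {}" by blast
  have S_le: "z \<le> (g (\<lambda>x. m x + t * y x) - a) / t" if "z \<in> S" "(m, a) \<in> G" "0 < t" for z m a t
    using that dominated_linear_graph_slopes[OF G(1) y] unfolding S_def by blast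
  have S_bdd: "bdd_above S"
    using S_le[OF _ zero zero_less_one] by (rule bdd_aboveI)
  show ?thesis
  proof (intro exI allI impI)
    fix m a and t :: real assume m: "(m, a) \<in> G"
    consider "0 < t" | "t = 0" | "t < 0" by (cases t "0::real" rule: linorder_cases) auto
    then show "a + t * Sup S \<le> g (\<lambda>x. m x + t * y x)"
    proof cases
      case 1
      then have "Sup S \<le> (g (\<lambda>x. m x + t * y x) - a) / t"
        using S_ne S_le[OF _ m] by (blast intro: cSup_least)
      with \<open>0 < t\<close> show ?thesis by (simp add: field_simps)
    next
      case 2
      then show ?thesis using dominated_linear_graph_le[OF G(1) m] by simp
    next
      case 3
      have "(a - g (\<lambda>x. m x - (- t) * y x)) / (- t) \<in> S"
        unfolding S_def mem_Collect_eq
        by (rule exI[of _ m], rule exI[of _ a], rule exI[of _ "- t"]) (simp add: m \<open>t < 0\<close>)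
      then have "(a - g (\<lambda>x. m x - (- t) * y x)) / (- t) \<le> Sup S"
        using S_bdd by (rule cSup_upper)
      with \<open>t < 0\<close> show ?thesis by (simp add: field_simps)
    qed
  qed
qed

definition graph_adjoin ::
    "(('a \<Rightarrow> real) \<times> real) set \<Rightarrow> ('a \<Rightarrow> real) \<Rightarrow> real \<Rightarrow> (('a \<Rightarrow> real) \<times> real) set" where
  "graph_adjoin G y c = {((\<lambda>x. m x + t * y x), a + t * c) | m a t. (m, a) \<in> G}"

lemma graph_adjoinI: "(m, a) \<in> G \<Longrightarrow> ((\<lambda>x. m x + t * y x), a + t * c) \<in> graph_adjoin G y c"
  unfolding graph_adjoin_def by blast

lemma graph_adjoinE:
  assumes "(X, b) \<in> graph_adjoin G y c"
  obtains m a t where "(m, a) \<in> G" "X = (\<lambda>x. m x + t * y x)" "b = a + t * c"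
  using assms unfolding graph_adjoin_def by blast

lemma graph_adjoin_kernel:
  assumes G: "dominated_linear_graph G" and y: "y \<notin> fst ` G"
    and "((\<lambda>x. 0), b) \<in> graph_adjoin G y c"
  shows "b = 0"
proof -
  obtain m a t where m: "(m, a) \<in> G" and m0: "(\<lambda>x. 0) = (\<lambda>x. m x + t * y x)"
    and b: "b = a + t * c"
    using assms(3) by (rule graph_adjoinE)
  have "t = 0"
  proof (rule ccontr)
    assume "t \<noteq> 0"
    have "y = (\<lambda>x. (- 1 / t) * m x)"
    proof
      fix x
      have "t * y x = - m x" using fun_cong[OF m0, of x] by simp
      with \<open>t \<noteq> 0\<close> show "y x = (- 1 / t) * m x" by (simp add: field_simps)
    qed
    moreover have "((\<lambda>x. (- 1 / t) * m x), (- 1 / t) * a) \<in> G"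
      by (rule dominated_linear_graph_scale[OF G m])
    ultimately show False
      using y by (metis fst_conv image_eqI)
  qed
  with m m0 have "((\<lambda>x. 0), a) \<in> G" by simp
  with \<open>t = 0\<close> b show "b = 0" using dominated_linear_graph_zero[OF G] by simp
qed

lemma dominated_linear_graph_adjoin:
  assumes G: "dominated_linear_graph G" and y: "y \<in> V" "y \<notin> fst ` G"
    and c: "\<And>m a t. (m, a) \<in> G \<Longrightarrow> a + t * c \<le> g (\<lambda>x. m x + t * y x)"
  shows "dominated_linear_graph (graph_adjoin G y c)"
  unfolding dominated_linear_graph_def
proof (intro conjI allI impI)
  show "graph_adjoin G y c \<subseteq> V \<times> UNIV"
    unfolding graph_adjoin_def using dominated_linear_graph_subset[OF G] lincomb_mem[OF _ y(1)]
    by blast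
next
  fix X a Y b assume X: "(X, a) \<in> graph_adjoin G y c" and Y: "(Y, b) \<in> graph_adjoin G y c"
  obtain m1 a1 t1 where "(m1, a1) \<in> G" "X = (\<lambda>x. m1 x + t1 * y x)" "a = a1 + t1 * c"
    using X by (rule graph_adjoinE)
  moreover obtain m2 a2 t2 where "(m2, a2) \<in> G" "Y = (\<lambda>x. m2 x + t2 * y x)" "b = a2 + t2 * c"
    using Y by (rule graph_adjoinE)
  ultimately show "((\<lambda>x. X x + Y x), a + b) \<in> graph_adjoin G y c"
    using graph_adjoinI[OF dominated_linear_graph_add[OF G], of m1 a1 m2 a2 "t1 + t2"]
    by (simp add: algebra_simps)
next
  fix X a r assume "(X, a) \<in> graph_adjoin G y c"
  then obtain m a0 t where "(m, a0) \<in> G" "X = (\<lambda>x. m x + t * y x)" "a = a0 + t * c"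
    by (rule graph_adjoinE)
  with graph_adjoinI[OF dominated_linear_graph_scale[OF G], of m a0 r "r * t"]
  show "((\<lambda>x. r * X x), r * a) \<in> graph_adjoin G y c"
    by (simp add: algebra_simps)
next
  fix a assume "((\<lambda>x. 0), a) \<in> graph_adjoin G y c"
  then show "a = 0" by (rule graph_adjoin_kernel[OF G y(2)])
next
  fix X a assume "(X, a) \<in> graph_adjoin G y c"
  then show "a \<le> g X"
    by (rule graph_adjoinE) (simp add: c)
qed

lemma dominated_linear_graph_extend:
  assumes G: "dominated_linear_graph G" "G \<noteq> {}" and y: "y \<in> V" "y \<notin> fst ` G"
  shows "\<exists>G'. dominated_linear_graph G' \<and> G \<subset> G'"
proof -
  obtain c where c: "\<And>m a t. (m, a) \<in> G \<Longrightarrow> a + t * c \<le> g (\<lambda>x. m x + t * y x)"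
    using dominated_linear_graph_extension_value[OF G y(1)] by blast
  have "G \<subseteq> graph_adjoin G y c"
    using graph_adjoinI[of _ _ G 0] by auto
  moreover have "(y, c) \<in> graph_adjoin G y c"
    using graph_adjoinI[OF dominated_linear_graph_zero_mem[OF G], of 1] by simp
  moreover have "(y, c) \<notin> G"
    using y(2) by (metis fst_conv image_eqI)
  ultimately show ?thesis
    using dominated_linear_graph_adjoin[OF G(1) y c] by blast
qed

theorem linear_minorant_exists:
  obtains L where "\<And>X Y. X \<in> V \<Longrightarrow> Y \<in> V \<Longrightarrow> L (\<lambda>x. X x + Y x) = L X + L Y"
    and "\<And>X c. X \<in> V \<Longrightarrow> L (\<lambda>x. c * X x) = c * L X"
    and "\<And>X. X \<in> V \<Longrightarrow> L X \<le> g X"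
proof -
  obtain M where M: "dominated_linear_graph M"
    and maximal: "\<And>G. dominated_linear_graph G \<Longrightarrow> M \<subseteq> G \<Longrightarrow> G = M"
    using Zorn_Lemma[of "Collect dominated_linear_graph"] dominated_linear_graph_Union_chain
    by auto
  have "dominated_linear_graph {((\<lambda>x. 0), 0)}"
    unfolding dominated_linear_graph_def using zero_mem nonneg_at_zero by auto
  then have M_ne: "M \<noteq> {}"
    using maximal by blast
  have total: "X \<in> fst ` M" if "X \<in> V" for X
    using dominated_linear_graph_extend[OF M M_ne that] maximal by blast
  define L where "L X = (THE a. (X, a) \<in> M)" for X
  have L_graph: "(X, L X) \<in> M" if "X \<in> V" for X
    unfolding L_def
    by (rule theI') (use total[OF that] dominated_linear_graph_unique[OF M] in force)
  have L_eq: "L X = a" if "(X, a) \<in> M" for X a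
    using that L_graph dominated_linear_graph_unique[OF M] dominated_linear_graph_subset[OF M]
    by blast
  show ?thesis
  proof (rule that)
    fix X Y assume "X \<in> V" "Y \<in> V"
    show "L (\<lambda>x. X x + Y x) = L X + L Y"
      by (rule L_eq, rule dominated_linear_graph_add[OF M]) (use L_graph \<open>X \<in> V\<close> \<open>Y \<in> V\<close> in auto)
  next
    fix X c assume "X \<in> V"
    show "L (\<lambda>x. c * X x) = c * L X"
      by (rule L_eq, rule dominated_linear_graph_scale[OF M]) (use L_graph \<open>X \<in> V\<close> in auto)
  next
    fix X assume "X \<in> V"
    show "L X \<le> g X"
      by (rule dominated_linear_graph_le[OF M L_graph[OF \<open>X \<in> V\<close>]])
  qed
qed

end

section \<open>Expectations with respect to finitely additive probabilities\<close>

lemma bounded_range_add: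
  "bounded (range X) \<Longrightarrow> bounded (range Y) \<Longrightarrow> bounded (range (\<lambda>x. X x + Y x :: real))"
  by (rule bounded_plus_comp)

lemma bounded_range_scale: "bounded (range X) \<Longrightarrow> bounded (range (\<lambda>x. c * X x :: real))"
  using bounded_scaleR_comp[of X UNIV c] by simp

lemma bounded_range_diff:
  "bounded (range X) \<Longrightarrow> bounded (range Y) \<Longrightarrow> bounded (range (\<lambda>x. X x - Y x :: real))"
  using bounded_range_add[of X "\<lambda>x. (- 1) * Y x"] bounded_range_scale[of Y "- 1"] by simp

lemma bounded_range_indicator: "bounded (range (indicator A :: 'a \<Rightarrow> real))"
  by (rule finite_imp_bounded, rule finite_subset[of _ "{0, 1}"]) (auto simp: indicator_def)

lemma Bb_imp_bounded: "X \<in> Bb F \<Longrightarrow> bounded (range X)"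
  by (auto simp: Bb_def bounded_real)

interpretation bounded_functions: linear_function_space "{X :: 'a \<Rightarrow> real. bounded (range X)}"
  by unfold_locales (auto intro: bounded_range_add bounded_range_scale)

lemma meas_wrt_iff_borel_measurable:
  assumes "sigma_algebra UNIV F"
  shows "meas_wrt F X \<longleftrightarrow> X \<in> borel_measurable (measure_of UNIV F (\<lambda>_. 0))"
  using assms
  by (simp add: meas_wrt_def in_borel_measurable_borel sigma_algebra.sets_measure_of_eq
      sigma_algebra.sigma_sets_eq space_measure_of_conv)

lemma simple_meas_level_set: "simple_meas F s \<Longrightarrow> s -` {y} \<in> F"
  unfolding simple_meas_def meas_wrt_def by auto

lemma simple_meas_const: "algebra UNIV F \<Longrightarrow> simple_meas F (\<lambda>x. c)"
proof -
  assume "algebra UNIV F"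
  then interpret algebra UNIV F .
  have "(\<lambda>x::'a. c) -` B \<in> F" for B
    by (cases "c \<in> B") auto
  then show ?thesis unfolding simple_meas_def meas_wrt_def by auto
qed

lemma simple_meas_approx_below:
  assumes F: "sigma_algebra UNIV F" and Y: "Y \<in> Bb F" and e: "0 < e"
  shows "\<exists>s. simple_meas F s \<and> (\<forall>x. s x \<le> Y x \<and> Y x - s x \<le> e)"
proof -
  obtain c where c: "\<And>x. \<bar>Y x\<bar> \<le> c" using Y unfolding Bb_def by blast
  define s where "s x = e * real_of_int \<lfloor>Y x / e\<rfloor>" for x
  have below: "s x \<le> Y x" and close: "Y x - s x \<le> e" for x
    using floor_divide_lower[OF e, of "Y x"] floor_divide_upper[OF e, of "Y x"]
    by (simp_all add: s_def algebra_simps)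
  have "range s \<subseteq> (\<lambda>k. e * real_of_int k) ` {\<lfloor>- c / e\<rfloor> .. \<lfloor>c / e\<rfloor>}"
  proof
    fix z assume "z \<in> range s"
    then obtain x where x: "z = s x" by blast
    have "- c / e \<le> Y x / e" "Y x / e \<le> c / e"
      using c[of x] e by (auto simp: abs_le_iff field_simps)
    then have "\<lfloor>Y x / e\<rfloor> \<in> {\<lfloor>- c / e\<rfloor> .. \<lfloor>c / e\<rfloor>}"
      by (auto intro: floor_mono)
    then show "z \<in> (\<lambda>k. e * real_of_int k) ` {\<lfloor>- c / e\<rfloor> .. \<lfloor>c / e\<rfloor>}"
      unfolding x s_def by (rule imageI)
  qed
  then have "finite (range s)"
    by (rule finite_subset) simp
  moreover have "meas_wrt F s"
  proof -
    let ?M = "measure_of UNIV F (\<lambda>_. 0)"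
    have "(\<lambda>x. Y x / e) \<in> borel_measurable ?M"
      using Y unfolding Bb_def meas_wrt_iff_borel_measurable[OF F] by (auto intro: borel_measurable_divide)
    then have "(\<lambda>x. real_of_int \<lfloor>Y x / e\<rfloor>) \<in> borel_measurable ?M"
      using measurable_compose[OF _ borel_measurable_real_floor] by (simp add: o_def)
    then show ?thesis
      unfolding s_def meas_wrt_iff_borel_measurable[OF F] by simp
  qed
  ultimately show ?thesis
    using below close unfolding simple_meas_def by blast
qed

lemma ba1_nonneg: "Q \<in> ba1 F \<Longrightarrow> A \<in> F \<Longrightarrow> 0 \<le> Q A"
  unfolding ba1_def by blast

lemma ba1_finite_additive:
  assumes F: "algebra UNIV F" and Q: "Q \<in> ba1 F"
  shows "finite I \<Longrightarrow> (\<And>i. i \<in> I \<Longrightarrow> A i \<in> F) \<Longrightarrow> disjoint_family_on A I \<Longrightarrow>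
    Q (\<Union>i\<in>I. A i) = (\<Sum>i\<in>I. Q (A i))"
proof (induction I rule: finite_induct)
  case empty
  interpret algebra UNIV F by (rule F)
  have "Q ({} \<union> {}) = Q {} + Q {}"
    using Q unfolding ba1_def by blast
  then show ?case by simp
next
  case (insert j I)
  interpret algebra UNIV F by (rule F)
  have "(\<Union>i\<in>I. A i) \<in> F" and "A j \<inter> (\<Union>i\<in>I. A i) = {}"
    using insert unfolding disjoint_family_on_def by auto
  then have "Q (A j \<union> (\<Union>i\<in>I. A i)) = Q (A j) + Q (\<Union>i\<in>I. A i)"
    using Q insert.prems(1) unfolding ba1_def by blast
  moreover have "Q (\<Union>i\<in>I. A i) = (\<Sum>i\<in>I. Q (A i))"
    using insert disjoint_family_on_mono[of I "insert j I"] by auto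
  ultimately show ?case using insert.hyps by simp
qed

lemma ba1_level_sets_sum:
  assumes F: "algebra UNIV F" and Q: "Q \<in> ba1 F" and s: "simple_meas F s"
  shows "(\<Sum>y\<in>range s. Q (s -` {y})) = 1"
proof -
  have "Q (\<Union>y\<in>range s. s -` {y}) = (\<Sum>y\<in>range s. Q (s -` {y}))"
    using s by (intro ba1_finite_additive[OF F Q])
      (auto simp: simple_meas_def simple_meas_level_set disjoint_family_on_def)
  moreover have "(\<Union>y\<in>range s. s -` {y}) = UNIV" by auto
  ultimately show ?thesis using Q unfolding ba1_def by simp
qed

lemma simple_int_le_bound:
  assumes F: "algebra UNIV F" and Q: "Q \<in> ba1 F" and s: "simple_meas F s"
    and bound: "\<And>x. s x \<le> c"
  shows "simple_int Q s \<le> c"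
proof -
  have "simple_int Q s \<le> (\<Sum>y\<in>range s. c * Q (s -` {y}))"
    unfolding simple_int_def
    using bound ba1_nonneg[OF Q simple_meas_level_set[OF s]]
    by (intro sum_mono) (auto intro: mult_right_mono)
  also have "\<dots> = c"
    using ba1_level_sets_sum[OF F Q s] by (simp add: sum_distrib_left [symmetric])
  finally show ?thesis .
qed

lemma expect_approximants:
  assumes F: "algebra UNIV F" and Q: "Q \<in> ba1 F" and X: "bounded (range X)"
  shows expect_approximants_nonempty: "{simple_int Q s | s. simple_meas F s \<and> s \<le> X} \<noteq> {}"
    and expect_approximants_bdd: "bdd_above {simple_int Q s | s. simple_meas F s \<and> s \<le> X}"
proof -
  obtain c where c: "\<And>x. \<bar>X x\<bar> \<le> c" using X by (auto simp: bounded_real)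
  have "(\<lambda>x. - c) \<le> X"
  proof (rule le_funI)
    fix x show "- c \<le> X x" using c[of x] by (simp add: abs_le_iff)
  qed
  then show "{simple_int Q s | s. simple_meas F s \<and> s \<le> X} \<noteq> {}"
    using simple_meas_const[OF F, of "- c"] by blast
  have "simple_int Q s \<le> c" if "simple_meas F s" "s \<le> X" for s
    using that c by (intro simple_int_le_bound[OF F Q]) (auto simp: le_fun_def abs_le_iff intro: order_trans)
  then show "bdd_above {simple_int Q s | s. simple_meas F s \<and> s \<le> X}"
    by (intro bdd_aboveI[of _ c]) blast
qed

lemma simple_int_le_expect:
  assumes F: "algebra UNIV F" and Q: "Q \<in> ba1 F" and X: "bounded (range X)"
    and s: "simple_meas F s" "s \<le> X"
  shows "simple_int Q s \<le> expect F Q X"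
  unfolding expect_def using s by (intro cSup_upper expect_approximants_bdd[OF F Q X]) blast

lemma expect_le:
  assumes F: "algebra UNIV F" and Q: "Q \<in> ba1 F" and X: "bounded (range X)"
    and le: "\<And>s. simple_meas F s \<Longrightarrow> s \<le> X \<Longrightarrow> simple_int Q s \<le> b"
  shows "expect F Q X \<le> b"
  unfolding expect_def using le by (intro cSup_least expect_approximants_nonempty[OF F Q X]) blast

lemma expect_mono:
  assumes F: "algebra UNIV F" and Q: "Q \<in> ba1 F"
    and X: "bounded (range X)" and Y: "bounded (range Y)" and XY: "\<And>x. X x \<le> Y x"
  shows "expect F Q X \<le> expect F Q Y"
  using XY by (intro expect_le[OF F Q X] simple_int_le_expect[OF F Q Y])
    (auto simp: le_fun_def intro: order_trans)

section \<open>Positive linear functionals are expectations\<close>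

locale normalized_positive_functional =
  fixes L :: "('a \<Rightarrow> real) \<Rightarrow> real"
  assumes additive: "bounded (range X) \<Longrightarrow> bounded (range Y) \<Longrightarrow> L (\<lambda>x. X x + Y x) = L X + L Y"
    and homogeneous: "bounded (range X) \<Longrightarrow> L (\<lambda>x. c * X x) = c * L X"
    and nonneg: "bounded (range X) \<Longrightarrow> (\<And>x. 0 \<le> X x) \<Longrightarrow> 0 \<le> L X"
    and normalized: "L (\<lambda>x. 1) = 1"
begin

lemma diff: "bounded (range X) \<Longrightarrow> bounded (range Y) \<Longrightarrow> L (\<lambda>x. X x - Y x) = L X - L Y"
  using additive[of X "\<lambda>x. (- 1) * Y x"] homogeneous[of Y "- 1"] bounded_range_scale[of Y "- 1"]
  by simp

lemma mono: "bounded (range X) \<Longrightarrow> bounded (range Y) \<Longrightarrow> (\<And>x. X x \<le> Y x) \<Longrightarrow> L X \<le> L Y"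
  using nonneg[of "\<lambda>x. Y x - X x"] diff[of Y X] bounded_range_diff[of Y X] by simp

lemma const: "L (\<lambda>x. c) = c"
  using homogeneous[of "\<lambda>x. 1" c] normalized by simp

lemma sum:
  "finite I \<Longrightarrow> (\<And>i. i \<in> I \<Longrightarrow> bounded (range (f i))) \<Longrightarrow>
    L (\<lambda>x. \<Sum>i\<in>I. f i x) = (\<Sum>i\<in>I. L (f i))"
proof (induction I rule: finite_induct)
  case empty
  then show ?case using const[of 0] by simp
next
  case (insert j I)
  then show ?case
    using additive[of "f j" "\<lambda>x. \<Sum>i\<in>I. f i x"] bounded_functions.sum_mem[of I f] by simp
qed

lemma simple_int_eq:
  assumes "finite (range s)"
  shows "simple_int (\<lambda>A. L (indicator A)) s = L s"
proof -
  have decomp: "s = (\<lambda>x. \<Sum>y\<in>range s. y * indicator (s -` {y}) x)"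
  proof
    fix x
    have "(\<Sum>y\<in>range s. y * indicator (s -` {y}) x) = (\<Sum>y\<in>range s. if y = s x then y else 0)"
      by (rule sum.cong) (auto simp: indicator_def)
    also have "\<dots> = s x" using assms by simp
    finally show "s x = (\<Sum>y\<in>range s. y * indicator (s -` {y}) x)" ..
  qed
  have "L s = L (\<lambda>x. \<Sum>y\<in>range s. y * indicator (s -` {y}) x)"
    by (rule arg_cong[where f = L, OF decomp])
  also have "\<dots> = (\<Sum>y\<in>range s. L (\<lambda>x. y * indicator (s -` {y}) x))"
    using assms by (intro sum) (auto intro: bounded_range_scale bounded_range_indicator)
  also have "\<dots> = simple_int (\<lambda>A. L (indicator A)) s"
    unfolding simple_int_def by (intro sum.cong refl homogeneous bounded_range_indicator)
  finally show ?thesis ..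
qed

lemma indicator_in_ba1: "(\<lambda>A. L (indicator A)) \<in> ba1 F"
  unfolding ba1_def
proof (intro CollectI conjI ballI impI)
  fix A :: "'a set"
  show "0 \<le> L (indicator A)"
    by (intro nonneg bounded_range_indicator) simp
next
  show "L (indicator UNIV) = 1" using normalized by simp
next
  fix A B :: "'a set" assume "A \<inter> B = {}"
  then have "indicator (A \<union> B) = (\<lambda>x. indicator A x + indicator B x :: real)"
    by (auto simp: indicator_def fun_eq_iff)
  then show "L (indicator (A \<union> B)) = L (indicator A) + L (indicator B)"
    by (simp add: additive bounded_range_indicator)
qed

theorem expect_eq:
  assumes F: "sigma_algebra UNIV F" and Y: "Y \<in> Bb F"
  shows "expect F (\<lambda>A. L (indicator A)) Y = L Y"
proof (rule antisym)
  have F': "algebra UNIV F" using F by (rule sigma_algebra.axioms)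
  note bY = Bb_imp_bounded[OF Y]
  show "expect F (\<lambda>A. L (indicator A)) Y \<le> L Y"
  proof (rule expect_le[OF F' indicator_in_ba1 bY])
    fix s assume "simple_meas F s" "s \<le> Y"
    then show "simple_int (\<lambda>A. L (indicator A)) s \<le> L Y"
      by (simp add: simple_int_eq simple_meas_def mono finite_imp_bounded bY le_fun_def)
  qed
  show "L Y \<le> expect F (\<lambda>A. L (indicator A)) Y"
  proof (rule field_le_epsilon)
    fix e :: real assume "0 < e"
    then obtain s where s: "simple_meas F s" and below: "\<And>x. s x \<le> Y x" and close: "\<And>x. Y x - s x \<le> e"
      using simple_meas_approx_below[OF F Y] by blast
    have bs: "bounded (range s)" using s by (simp add: simple_meas_def finite_imp_bounded)
    have "L Y = L s + L (\<lambda>x. Y x - s x)"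
      using diff[OF bY bs] by simp
    also have "L (\<lambda>x. Y x - s x) \<le> e"
      using mono[OF bounded_range_diff[OF bY bs] _ close] const[of e]
      by simp
    also have "L s \<le> expect F (\<lambda>A. L (indicator A)) Y"
      using simple_int_le_expect[OF F' indicator_in_ba1 bY s] simple_int_eq s below
      by (simp add: simple_meas_def le_fun_def)
    finally show "L Y \<le> expect F (\<lambda>A. L (indicator A)) Y + e" by simp
  qed
qed

end

section \<open>The superhedging functional of a convex premium principle\<close>

lemma ereal_diff_le_ereal_iff: "ereal a - h \<le> ereal b \<longleftrightarrow> ereal (a - b) \<le> h"
  by (cases h) auto

locale convex_premium_principle = linear_function_space C for C :: "('a \<Rightarrow> real) set" +
  fixes F :: "'a set set" and H :: "('a \<Rightarrow> real) \<Rightarrow> real"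
  assumes F_sigma_algebra: "sigma_algebra UNIV F"
    and C_subset_Bb: "C \<subseteq> Bb F"
    and const_mem: "(\<lambda>x. c) \<in> C"
    and premium: "premium_principle F C H"
    and convex: "convex_pp C H"
begin

lemma H_add_const: "X \<in> C \<Longrightarrow> H (\<lambda>x. X x + m) = H X + m"
  using premium unfolding premium_principle_def by blast

lemma H_nonneg: "X \<in> C \<Longrightarrow> (\<And>x. 0 \<le> X x) \<Longrightarrow> 0 \<le> H X"
  using premium unfolding premium_principle_def by blast

lemma H_convex: "X \<in> C \<Longrightarrow> Y \<in> C \<Longrightarrow> 0 \<le> l \<Longrightarrow> l \<le> 1 \<Longrightarrow>
    H (\<lambda>x. l * X x + (1 - l) * Y x) \<le> l * H X + (1 - l) * H Y"
  using convex unfolding convex_pp_def by blast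

lemma bounded_range_mem: "X \<in> C \<Longrightarrow> bounded (range X)"
  using C_subset_Bb Bb_imp_bounded by blast

definition dominating :: "('a \<Rightarrow> real) \<Rightarrow> ('a \<Rightarrow> real) set" where
  "dominating X = {X0 \<in> C. \<forall>x. X x \<le> X0 x}"

definition rmax :: "('a \<Rightarrow> real) \<Rightarrow> real" where
  "rmax X = Inf (H ` dominating X)"

lemma dominating_nonempty:
  assumes "bounded (range X)" shows "dominating X \<noteq> {}"
proof -
  obtain c where "\<And>x. \<bar>X x\<bar> \<le> c" using assms by (auto simp: bounded_real)
  then have "(\<lambda>x. c) \<in> dominating X"
    unfolding dominating_def using const_mem by (auto simp: abs_le_iff)
  then show ?thesis by blast
qed

lemma H_dominating_bdd_below:
  assumes "bounded (range X)" shows "bdd_below (H ` dominating X)"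
proof -
  obtain c where c: "\<And>x. \<bar>X x\<bar> \<le> c" using assms by (auto simp: bounded_real)
  have "- c \<le> H X0" if "X0 \<in> dominating X" for X0
  proof -
    have X0: "X0 \<in> C" "\<And>x. X x \<le> X0 x" using that unfolding dominating_def by auto
    have "(\<lambda>x. X0 x + c) \<in> C" using add_mem[OF X0(1) const_mem] .
    moreover have "0 \<le> X0 x + c" for x using X0(2)[of x] c[of x] by (simp add: abs_le_iff)
    ultimately have "0 \<le> H (\<lambda>x. X0 x + c)" by (rule H_nonneg)
    then show ?thesis using H_add_const[OF X0(1)] by simp
  qed
  then show ?thesis by (rule bdd_belowI2)
qed

lemma RMax_eq_rmax: "bounded (range X) \<Longrightarrow> RMax C H X = ereal (rmax X)"
  unfolding RMax_def rmax_def dominating_def [symmetric]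
  by (simp add: ereal_Inf' H_dominating_bdd_below dominating_nonempty image_comp o_def)

lemma rmax_le: "bounded (range X) \<Longrightarrow> X0 \<in> dominating X \<Longrightarrow> rmax X \<le> H X0"
  unfolding rmax_def by (intro cInf_lower imageI H_dominating_bdd_below)

lemma rmax_greatest:
  "bounded (range X) \<Longrightarrow> (\<And>X0. X0 \<in> dominating X \<Longrightarrow> b \<le> H X0) \<Longrightarrow> b \<le> rmax X"
  unfolding rmax_def by (intro cInf_greatest) (auto simp: dominating_nonempty)

lemma rmax_approx:
  assumes "bounded (range X)" "0 < e"
  obtains X0 where "X0 \<in> dominating X" "H X0 < rmax X + e"
proof -
  have "\<exists>z\<in>H ` dominating X. z < rmax X + e"
    unfolding rmax_def using assms dominating_nonempty
    by (intro cInf_lessD) auto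
  then show ?thesis using that by blast
qed

lemma rmax_le_H: "X \<in> C \<Longrightarrow> rmax X \<le> H X"
  by (intro rmax_le bounded_range_mem) (auto simp: dominating_def)

lemma rmax_mono:
  assumes X: "bounded (range X)" and Y: "bounded (range Y)" and le: "\<And>x. X x \<le> Y x"
  shows "rmax X \<le> rmax Y"
proof (rule rmax_greatest[OF Y])
  fix Y0 assume "Y0 \<in> dominating Y"
  with le have "Y0 \<in> dominating X" unfolding dominating_def by (auto intro: order_trans)
  then show "rmax X \<le> H Y0" by (rule rmax_le[OF X])
qed

lemma rmax_add_const_le:
  assumes X: "bounded (range X)" shows "rmax (\<lambda>x. X x + c) \<le> rmax X + c"
proof -
  have "rmax (\<lambda>x. X x + c) - c \<le> rmax X"
  proof (rule rmax_greatest[OF X])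
    fix X0 assume X0: "X0 \<in> dominating X"
    then have "(\<lambda>x. X0 x + c) \<in> dominating (\<lambda>x. X x + c)"
      using add_mem[OF _ const_mem] unfolding dominating_def by auto
    then have "rmax (\<lambda>x. X x + c) \<le> H (\<lambda>x. X0 x + c)"
      by (intro rmax_le bounded_range_add X) simp
    moreover have "H (\<lambda>x. X0 x + c) = H X0 + c"
      using X0 H_add_const unfolding dominating_def by blast
    ultimately show "rmax (\<lambda>x. X x + c) - c \<le> H X0" by simp
  qed
  then show ?thesis by simp
qed

lemma rmax_convex:
  assumes X: "bounded (range X)" and Y: "bounded (range Y)" and l: "0 \<le> l" "l \<le> 1"
  shows "rmax (\<lambda>x. l * X x + (1 - l) * Y x) \<le> l * rmax X + (1 - l) * rmax Y"
proof (rule field_le_epsilon)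
  fix e :: real assume "0 < e"
  obtain X0 where X0: "X0 \<in> dominating X" "H X0 < rmax X + e"
    using rmax_approx[OF X \<open>0 < e\<close>] .
  obtain Y0 where Y0: "Y0 \<in> dominating Y" "H Y0 < rmax Y + e"
    using rmax_approx[OF Y \<open>0 < e\<close>] .
  have "l * X x + (1 - l) * Y x \<le> l * X0 x + (1 - l) * Y0 x" for x
    using X0(1) Y0(1) l unfolding dominating_def by (intro add_mono mult_left_mono) auto
  moreover have "(\<lambda>x. l * X0 x + (1 - l) * Y0 x) \<in> C"
    using X0(1) Y0(1) unfolding dominating_def by (intro add_mem scale_mem) auto
  ultimately have "(\<lambda>x. l * X0 x + (1 - l) * Y0 x) \<in> dominating (\<lambda>x. l * X x + (1 - l) * Y x)"
    unfolding dominating_def by blast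
  then have "rmax (\<lambda>x. l * X x + (1 - l) * Y x) \<le> H (\<lambda>x. l * X0 x + (1 - l) * Y0 x)"
    by (intro rmax_le bounded_range_add bounded_range_scale X Y)
  also have "\<dots> \<le> l * H X0 + (1 - l) * H Y0"
    using X0(1) Y0(1) l by (intro H_convex) (auto simp: dominating_def)
  also have "\<dots> \<le> l * (rmax X + e) + (1 - l) * (rmax Y + e)"
    using X0(2) Y0(2) l by (intro add_mono mult_left_mono) auto
  finally show "rmax (\<lambda>x. l * X x + (1 - l) * Y x) \<le> l * rmax X + (1 - l) * rmax Y + e"
    by (simp add: algebra_simps)
qed

lemma expect_minus_Hstar_le_RMax:
  assumes Q: "Q \<in> ba1 F" and X: "X \<in> Bb F"
  shows "ereal (expect F Q X) - Hstar F C H Q \<le> RMax C H X"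
  unfolding RMax_def dominating_def [symmetric]
proof (rule INF_greatest)
  fix X0 assume X0: "X0 \<in> dominating X"
  then have "X0 \<in> C" "\<And>x. X x \<le> X0 x" unfolding dominating_def by auto
  then have "expect F Q X \<le> expect F Q X0"
    using sigma_algebra.axioms(1)[OF F_sigma_algebra] Q Bb_imp_bounded[OF X] bounded_range_mem
    by (intro expect_mono) auto
  then have "ereal (expect F Q X - H X0) \<le> ereal (expect F Q X0 - H X0)" by simp
  also have "\<dots> \<le> Hstar F C H Q"
    unfolding Hstar_def using \<open>X0 \<in> C\<close> by (rule SUP_upper)
  finally show "ereal (expect F Q X) - Hstar F C H Q \<le> ereal (H X0)"
    by (simp add: ereal_diff_le_ereal_iff)
qed

lemma rmax_subgradient:
  assumes X: "bounded (range X)"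
  obtains L where "normalized_positive_functional L"
    and "\<And>Y. bounded (range Y) \<Longrightarrow> L Y \<le> rmax (\<lambda>x. X x + Y x) - rmax X"
proof -
  interpret convex_functional "{Y. bounded (range Y)}" "\<lambda>Y. rmax (\<lambda>x. X x + Y x) - rmax X"
  proof
    fix Y Z :: "'a \<Rightarrow> real" and l :: real
    assume "Y \<in> {Y. bounded (range Y)}" "Z \<in> {Y. bounded (range Y)}" "0 \<le> l" "l \<le> 1"
    moreover have "(\<lambda>x. X x + (l * Y x + (1 - l) * Z x))
        = (\<lambda>x. l * (X x + Y x) + (1 - l) * (X x + Z x))"
      by (simp add: algebra_simps)
    ultimately show "rmax (\<lambda>x. X x + (l * Y x + (1 - l) * Z x)) - rmax X
        \<le> l * (rmax (\<lambda>x. X x + Y x) - rmax X) + (1 - l) * (rmax (\<lambda>x. X x + Z x) - rmax X)"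
      using rmax_convex[OF bounded_range_add[OF X] bounded_range_add[OF X], of Y Z l]
      by (simp add: algebra_simps)
  qed simp
  obtain L where additive: "\<And>Y Z. bounded (range Y) \<Longrightarrow> bounded (range Z) \<Longrightarrow>
        L (\<lambda>x. Y x + Z x) = L Y + L Z"
    and homogeneous: "\<And>Y c. bounded (range Y) \<Longrightarrow> L (\<lambda>x. c * Y x) = c * L Y"
    and below: "\<And>Y. bounded (range Y) \<Longrightarrow> L Y \<le> rmax (\<lambda>x. X x + Y x) - rmax X"
    by (rule linear_minorant_exists) auto
  have nonneg: "0 \<le> L Y" if Y: "bounded (range Y)" and "\<And>x. 0 \<le> Y x" for Y
  proof -
    have "- L Y = L (\<lambda>x. (- 1) * Y x)" using homogeneous[OF Y, of "- 1"] by simp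
    also have "\<dots> \<le> rmax (\<lambda>x. X x + (- 1) * Y x) - rmax X"
      using below bounded_range_scale[OF Y] by blast
    also have "rmax (\<lambda>x. X x + (- 1) * Y x) \<le> rmax X"
      using that by (intro rmax_mono bounded_range_add bounded_range_scale X) auto
    finally show ?thesis by simp
  qed
  have const_le: "L (\<lambda>x. c) \<le> c" for c
    using below[of "\<lambda>x. c"] rmax_add_const_le[OF X, of c] by simp
  have "L (\<lambda>x. - 1) = - L (\<lambda>x. 1)"
    using homogeneous[of "\<lambda>x. 1" "- 1"] by simp
  then have "L (\<lambda>x. 1) = 1"
    using const_le[of 1] const_le[of "- 1"] by linarith
  then have "normalized_positive_functional L"
    by unfold_locales (use additive homogeneous nonneg in auto)
  with below show ?thesis using that by blast
qed

theorem Hstar_attained: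
  assumes X: "X \<in> Bb F"
  obtains P where "P \<in> ba1 F" and "Hstar F C H P = ereal (expect F P X - rmax X)"
proof -
  note bX = Bb_imp_bounded[OF X]
  obtain L where L: "normalized_positive_functional L"
    and below: "\<And>Y. bounded (range Y) \<Longrightarrow> L Y \<le> rmax (\<lambda>x. X x + Y x) - rmax X"
    using rmax_subgradient[OF bX] by blast
  interpret normalized_positive_functional L by (rule L)
  define P where "P A = L (indicator A)" for A
  have P: "P \<in> ba1 F" unfolding P_def by (rule indicator_in_ba1)
  have expect_P: "expect F P Y = L Y" if "Y \<in> Bb F" for Y
    unfolding P_def using F_sigma_algebra that by (rule expect_eq)
  have "Hstar F C H P \<le> ereal (expect F P X - rmax X)"
    unfolding Hstar_def
  proof (rule SUP_least)
    fix Z assume Z: "Z \<in> C"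
    note bZ = bounded_range_mem[OF Z]
    have "L Z - L X = L (\<lambda>x. Z x - X x)" using diff[OF bZ bX] ..
    also have "\<dots> \<le> rmax Z - rmax X"
      using below[OF bounded_range_diff[OF bZ bX]] by simp
    finally show "ereal (expect F P Z - H Z) \<le> ereal (expect F P X - rmax X)"
      using rmax_le_H[OF Z] expect_P[OF X] expect_P Z C_subset_Bb by auto
  qed
  moreover have "ereal (expect F P X - rmax X) \<le> Hstar F C H P"
    using expect_minus_Hstar_le_RMax[OF P X] RMax_eq_rmax[OF bX]
    by (simp add: ereal_diff_le_ereal_iff)
  ultimately show ?thesis using that P by (metis antisym)
qed

lemma Hstar_eq_SUP_RMax:
  assumes P: "P \<in> ba1 F"
  shows "Hstar F C H P = (SUP X\<in>Bb F. ereal (expect F P X) - RMax C H X)"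
proof (rule antisym)
  show "Hstar F C H P \<le> (SUP X\<in>Bb F. ereal (expect F P X) - RMax C H X)"
    unfolding Hstar_def
  proof (rule SUP_least)
    fix Z assume Z: "Z \<in> C"
    then have "ereal (expect F P Z - H Z) \<le> ereal (expect F P Z) - RMax C H Z"
      using RMax_eq_rmax[OF bounded_range_mem] rmax_le_H by simp
    also have "\<dots> \<le> (SUP X\<in>Bb F. ereal (expect F P X) - RMax C H X)"
      using Z C_subset_Bb by (intro SUP_upper) auto
    finally show "ereal (expect F P Z - H Z) \<le> \<dots>" .
  qed
  show "(SUP X\<in>Bb F. ereal (expect F P X) - RMax C H X) \<le> Hstar F C H P"
  proof (rule SUP_least)
    fix X assume X: "X \<in> Bb F"
    then show "ereal (expect F P X) - RMax C H X \<le> Hstar F C H P"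
      using expect_minus_Hstar_le_RMax[OF P X] RMax_eq_rmax[OF Bb_imp_bounded]
      by (simp add: ereal_diff_le_ereal_iff)
  qed
qed

end

theorem theorem3p1:
  fixes F :: "'a set set" and C :: "('a \<Rightarrow> real) set" and H :: "('a \<Rightarrow> real) \<Rightarrow> real"
  assumes "sigma_algebra UNIV F"
    and "C \<subseteq> Bb F"
    and "\<forall>X\<in>C. \<forall>Y\<in>C. (\<lambda>x. X x + Y x) \<in> C"
    and "\<forall>X\<in>C. \<forall>a::real. (\<lambda>x. a * X x) \<in> C"
    and "\<forall>c::real. (\<lambda>x. c) \<in> C"
    and "premium_principle F C H"
    and "convex_pp C H"
  shows "(\<forall>X\<in>Bb F. \<exists>P\<in>ba1 F. RMax C H X = ereal (expect F P X) - Hstar F C H P \<and>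
            (\<forall>Q\<in>ba1 F. ereal (expect F Q X) - Hstar F C H Q \<le> RMax C H X))
       \<and> (\<forall>P\<in>ba1 F. Hstar F C H P = (SUP X\<in>Bb F. ereal (expect F P X) - RMax C H X))"
proof -
  interpret convex_premium_principle C F H
    using assms
    by (intro convex_premium_principle.intro linear_function_space.intro
        convex_premium_principle_axioms.intro) auto
  show ?thesis
  proof (intro conjI ballI)
    fix X assume X: "X \<in> Bb F"
    obtain P where P: "P \<in> ba1 F" "Hstar F C H P = ereal (expect F P X - rmax X)"
      using Hstar_attained[OF X] .
    then have "RMax C H X = ereal (expect F P X) - Hstar F C H P"
      using RMax_eq_rmax[OF Bb_imp_bounded[OF X]] by simp
    then show "\<exists>P\<in>ba1 F. RMax C H X = ereal (expect F P X) - Hstar F C H P \<and>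
        (\<forall>Q\<in>ba1 F. ereal (expect F Q X) - Hstar F C H Q \<le> RMax C H X)"
      using P(1) expect_minus_Hstar_le_RMax[OF _ X] by blast
  next
    fix P assume "P \<in> ba1 F"
    then show "Hstar F C H P = (SUP X\<in>Bb F. ereal (expect F P X) - RMax C H X)"
      by (rule Hstar_eq_SUP_RMax)
  qed
qed

end
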